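(* Let $(A,\varphi,\phi_A,[\cdot,\cdot]_A,a_A,K,\langle\cdot,\cdot\rangle)$ be a para-Kähler hom-Lie algebroid with hom-Levi-Civita connection $\nabla$, and let $\widetilde\nabla$ be the dual of the representation $X\mapsto\nabla_X|_{\Gamma(A^1)}$ of $A^1$, i.e. for $X,Y\in\Gamma(A^1)$, $\xi\in\Gamma((A^1)^* )$, $$\langle\widetilde\nabla_X\xi,Y\rangle=a_A(\phi_A(X))\big(\langle\xi,\phi_{A^1}^{-1}(Y)\rangle\big)-\varphi^*\langle\xi,\nabla_{\phi_{A^1}^{-1}(X)}\phi_{A^1}^{-2}(Y)\rangle.$$ Then $(A^1\oplus(A^1)^*,\varphi,\phi,[\cdot,\cdot],a)$ is a hom-Lie algebroid, where for $X,Y\in\Gamma(A^1)$, $\alpha,\beta\in\Gamma((A^1)^* )$: $[X+\alpha,Y+\beta]=[X,Y]_{A^1}+\widetilde\nabla_X\beta-\widetilde\nabla_Y\alpha$, $\phi(X+\alpha)=\phi_{A^1}(X)+\phi_{(A^1)^*}(\alpha)$ with $\phi_{(A^1)^*}=(\phi_{A^1})^\dagger$, and $a(X+\alpha)=a_A(X)$.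
   Context: Standing conventions. $M$ is a smooth manifold, $\varphi:M\to M$ a diffeomorphism, $\varphi^*f=f\circ\varphi$. A hom-bundle $(A\to M,\varphi,\phi_A)$ is a vector bundle $A\to M$ together with an invertible $\mathbb R$-linear map $\phi_A:\Gamma(A)\to\Gamma(A)$ with $\phi_A(fX)=\varphi^*(f)\phi_A(X)$. $\varphi^!TM$ is the pullback bundle; its sections are identified with $\mathbb R$-linear maps $D:C^\infty(M)\to C^\infty(M)$ with $D(fg)=D(f)\varphi^*(g)+\varphi^*(f)D(g)$. A hom-Lie algebroid $(A,\varphi,\phi_A,[\cdot,\cdot]_A,a_A)$ consists of a hom-bundle, a skew-symmetric $\mathbb R$-bilinear bracket on $\Gamma(A)$ with $\phi_A[X,Y]_A=[\phi_A X,\phi_A Y]_A$ and $[\phi_A(X),[Y,Z]_A]_A+[\phi_A(Y),[Z,X]_A]_A+[\phi_A(Z),[X,Y]_A]_A=0$, and a bundle map $a_A:A\to\varphi^!TM$ such that $[X,fY]_A=\varphi^*(f)[X,Y]_A+a_A(\phi_A(X))(f)\phi_A(Y)$, $\varphi^*\circ a_A(X)=a_A(\phi_A(X))\circ\varphi^*$, and $a_A([X,Y]_A)\circ\varphi^*=a_A(\phi_AX)\circ a_A(Y)-a_A(\phi_AY)\circ a_A(X)$. For a hom-bundle $(E,\varphi,\phi_E)$, $\phi_E^\dagger$ on $\Gamma(E^* )$ is $\langle\phi_E^\dagger\xi,e\rangle=\varphi^*\langle\xi,\phi_E^{-1}e\rangle$. Pseudo-Riemannian metric: a symmetric nondegenerate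 bilinear form $\langle\cdot,\cdot\rangle$ on $A$ with $\langle\phi_AX,\phi_AY\rangle=\varphi^*\langle X,Y\rangle$. The hom-Levi-Civita connection is the unique $\mathbb R$-bilinear $\nabla:\Gamma(A)\times\Gamma(A)\to\Gamma(A)$ with $\nabla_{fX}Y=\varphi^*(f)\nabla_XY$, $\nabla_X(fY)=\varphi^*(f)\nabla_XY+a_A(\phi_AX)(f)\phi_A(Y)$, $[X,Y]_A=\nabla_XY-\nabla_YX$, and $a_A(\phi_AX)\langle Y,Z\rangle=\langle\nabla_XY,\phi_AZ\rangle+\langle\phi_AY,\nabla_XZ\rangle$. An almost para-complex structure is an invertible map $K:\Gamma(A)\to\Gamma(A)$ with $(\phi_A\circ K)^2=\mathrm{Id}$, $\phi_A\circ K=K\circ\phi_A$, and such that $A^1=\ker(\phi_A\circ K-\mathrm{Id})$ and $A^{-1}=\ker(\phi_A\circ K+\mathrm{Id})$ have the same rank. $(K,\langle\cdot,\cdot\rangle)$ is almost para-Hermitian if $\langle(\phi_A\circ K)X,(\phi_A\circ K)Y\rangle=-\langle X,Y\rangle$. A para-Kähler hom-Lie algebroid is an almost para-Hermitian hom-Lie algebroid with $\nabla_X\phi_A(KY)=\phi_A(K(\nabla_XY))$ for all $X,Y$. In this situation $A^1$ is $\phi_A$-invariant and closed under $[\cdot,\cdot]_A$ and $\nabla$, and is a hom-Lie algebroid $(A^1,\varphi,\phi_{A^1},[\cdot,\cdot]_{A^1},a_{A^1})$ with the restricted structures. *)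

theory Defs
  imports Complex_Main "HOL-Library.Function_Algebras" "HOL-Library.Product_Plus"
begin

text \<open>C^infty(M) is modelled by an abstract commutative real algebra 'f;
 the pull-back phi^* by a real-algebra automorphism ps of 'f.  The space of sections of a
 vector bundle is a subset S of an abelian group 's, closed under the operations, which is a
 module over 'f (scalar action sm) and finitely generated projective (Serre--Swan).\<close>

definition ralg_aut :: "('f::{comm_ring_1,real_algebra_1} \<Rightarrow> 'f) \<Rightarrow> bool" where
  "ralg_aut ps \<longleftrightarrow> bij ps \<and> (\<forall>f g. ps (f + g) = ps f + ps g) \<and> (\<forall>f g. ps (f * g) = ps f * ps g)
     \<and> ps 1 = 1 \<and> (\<forall>c. ps (of_real c) = of_real c)"

definition module_on :: "'s::ab_group_add set \<Rightarrow> ('f::{comm_ring_1,real_algebra_1} \<Rightarrow> 's \<Rightarrow> 's) \<Rightarrow> bool" where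
  "module_on S sm \<longleftrightarrow> 0 \<in> S \<and> (\<forall>x\<in>S. \<forall>y\<in>S. x + y \<in> S) \<and> (\<forall>x\<in>S. - x \<in> S)
     \<and> (\<forall>f. \<forall>x\<in>S. sm f x \<in> S)
     \<and> (\<forall>f. \<forall>x\<in>S. \<forall>y\<in>S. sm f (x + y) = sm f x + sm f y)
     \<and> (\<forall>f g. \<forall>x\<in>S. sm (f + g) x = sm f x + sm g x)
     \<and> (\<forall>f g. \<forall>x\<in>S. sm (f * g) x = sm f (sm g x))
     \<and> (\<forall>x\<in>S. sm 1 x = x)"

text \<open>'f-linear functionals on S (sections of the dual bundle), extensional outside S.\<close>
definition dual_on :: "'s::ab_group_add set \<Rightarrow> ('f::{comm_ring_1,real_algebra_1} \<Rightarrow> 's \<Rightarrow> 's) \<Rightarrow> ('s \<Rightarrow> 'f) set" where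
  "dual_on S sm = {\<xi>. (\<forall>x\<in>S. \<forall>y\<in>S. \<xi> (x + y) = \<xi> x + \<xi> y) \<and> (\<forall>f. \<forall>x\<in>S. \<xi> (sm f x) = f * \<xi> x)
                      \<and> (\<forall>x. x \<notin> S \<longrightarrow> \<xi> x = 0)}"

text \<open>Finite dual basis (g_j, eta_j), j<n, of S; the trace sum eta_j(g_j) is the rank function.\<close>
definition has_rank :: "'s::ab_group_add set \<Rightarrow> ('f::{comm_ring_1,real_algebra_1} \<Rightarrow> 's \<Rightarrow> 's) \<Rightarrow> 'f \<Rightarrow> bool" where
  "has_rank S sm r \<longleftrightarrow> (\<exists>(n::nat) g \<eta>. (\<forall>j<n. g j \<in> S \<and> \<eta> j \<in> dual_on S sm)
       \<and> (\<forall>x\<in>S. x = (\<Sum>j<n. sm (\<eta> j x) (g j))) \<and> r = (\<Sum>j<n. \<eta> j (g j)))"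

definition vector_bundle :: "'s::ab_group_add set \<Rightarrow> ('f::{comm_ring_1,real_algebra_1} \<Rightarrow> 's \<Rightarrow> 's) \<Rightarrow> bool" where
  "vector_bundle S sm \<longleftrightarrow> module_on S sm \<and> (\<exists>r. has_rank S sm r)"

definition hom_bundle ::
  "('f::{comm_ring_1,real_algebra_1} \<Rightarrow> 'f) \<Rightarrow> 's::ab_group_add set \<Rightarrow> ('f \<Rightarrow> 's \<Rightarrow> 's) \<Rightarrow> ('s \<Rightarrow> 's) \<Rightarrow> bool" where
  "hom_bundle ps S sm ph \<longleftrightarrow> ralg_aut ps \<and> vector_bundle S sm \<and> bij_betw ph S S
     \<and> (\<forall>x\<in>S. \<forall>y\<in>S. ph (x + y) = ph x + ph y) \<and> (\<forall>f. \<forall>x\<in>S. ph (sm f x) = sm (ps f) (ph x))"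

text \<open>Sections of the pull-back bundle phi^! TM: R-linear phi^*-derivations of 'f.\<close>
definition phi_derivation :: "('f::{comm_ring_1,real_algebra_1} \<Rightarrow> 'f) \<Rightarrow> ('f \<Rightarrow> 'f) \<Rightarrow> bool" where
  "phi_derivation ps D \<longleftrightarrow> (\<forall>f g. D (f + g) = D f + D g) \<and> (\<forall>c f. D (of_real c * f) = of_real c * D f)
     \<and> (\<forall>f g. D (f * g) = D f * ps g + ps f * D g)"

definition hom_Lie_algebroid ::
  "('f::{comm_ring_1,real_algebra_1} \<Rightarrow> 'f) \<Rightarrow> 's::ab_group_add set \<Rightarrow> ('f \<Rightarrow> 's \<Rightarrow> 's) \<Rightarrow> ('s \<Rightarrow> 's)
     \<Rightarrow> ('s \<Rightarrow> 's \<Rightarrow> 's) \<Rightarrow> ('s \<Rightarrow> 'f \<Rightarrow> 'f) \<Rightarrow> bool" where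
  "hom_Lie_algebroid ps S sm ph br an \<longleftrightarrow> hom_bundle ps S sm ph
     \<and> (\<forall>x\<in>S. \<forall>y\<in>S. br x y \<in> S)
     \<and> (\<forall>x\<in>S. \<forall>y\<in>S. \<forall>z\<in>S. br (x + y) z = br x z + br y z)
     \<and> (\<forall>c. \<forall>x\<in>S. \<forall>y\<in>S. br (sm (of_real c) x) y = sm (of_real c) (br x y))
     \<and> (\<forall>x\<in>S. \<forall>y\<in>S. br x y = - br y x)
     \<and> (\<forall>x\<in>S. \<forall>y\<in>S. ph (br x y) = br (ph x) (ph y))
     \<and> (\<forall>x\<in>S. \<forall>y\<in>S. \<forall>z\<in>S. br (ph x) (br y z) + br (ph y) (br z x) + br (ph z) (br x y) = 0)
     \<and> (\<forall>x\<in>S. phi_derivation ps (an x))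
     \<and> (\<forall>x\<in>S. \<forall>y\<in>S. an (x + y) = (\<lambda>g. an x g + an y g))
     \<and> (\<forall>f. \<forall>x\<in>S. an (sm f x) = (\<lambda>g. f * an x g))
     \<and> (\<forall>f. \<forall>x\<in>S. \<forall>y\<in>S. br x (sm f y) = sm (ps f) (br x y) + sm (an (ph x) f) (ph y))
     \<and> (\<forall>x\<in>S. \<forall>f. ps (an x f) = an (ph x) (ps f))
     \<and> (\<forall>x\<in>S. \<forall>y\<in>S. \<forall>f. an (br x y) (ps f) = an (ph x) (an y f) - an (ph y) (an x f))"

text \<open>From here on, Gamma(A) is the whole type 'a.\<close>
definition pseudo_metric ::
  "('f::{comm_ring_1,real_algebra_1} \<Rightarrow> 'f) \<Rightarrow> ('f \<Rightarrow> 'a::ab_group_add \<Rightarrow> 'a) \<Rightarrow> ('a \<Rightarrow> 'a) \<Rightarrow> ('a \<Rightarrow> 'a \<Rightarrow> 'f) \<Rightarrow> bool" where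
  "pseudo_metric ps sm ph g \<longleftrightarrow> (\<forall>x y. g x y = g y x) \<and> (\<forall>x. g x \<in> dual_on UNIV sm)
     \<and> bij_betw g UNIV (dual_on UNIV sm)
     \<and> (\<forall>x y. g (ph x) (ph y) = ps (g x y))"

definition hom_LC_connection ::
  "('f::{comm_ring_1,real_algebra_1} \<Rightarrow> 'f) \<Rightarrow> ('f \<Rightarrow> 'a::ab_group_add \<Rightarrow> 'a) \<Rightarrow> ('a \<Rightarrow> 'a)
     \<Rightarrow> ('a \<Rightarrow> 'a \<Rightarrow> 'a) \<Rightarrow> ('a \<Rightarrow> 'f \<Rightarrow> 'f) \<Rightarrow> ('a \<Rightarrow> 'a \<Rightarrow> 'f) \<Rightarrow> ('a \<Rightarrow> 'a \<Rightarrow> 'a) \<Rightarrow> bool" where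
  "hom_LC_connection ps sm ph br an g nb \<longleftrightarrow>
       (\<forall>x y z. nb (x + y) z = nb x z + nb y z) \<and> (\<forall>x y z. nb x (y + z) = nb x y + nb x z)
     \<and> (\<forall>c x y. nb (sm (of_real c) x) y = sm (of_real c) (nb x y))
     \<and> (\<forall>c x y. nb x (sm (of_real c) y) = sm (of_real c) (nb x y))
     \<and> (\<forall>f x y. nb (sm f x) y = sm (ps f) (nb x y))
     \<and> (\<forall>f x y. nb x (sm f y) = sm (ps f) (nb x y) + sm (an (ph x) f) (ph y))
     \<and> (\<forall>x y. br x y = nb x y - nb y x)
     \<and> (\<forall>x y z. an (ph x) (g y z) = g (nb x y) (ph z) + g (ph y) (nb x z))"

text \<open>Almost para-complex structure K; P = phi_A o K is required to be a bundle map
 ('f-linear), so that A^1, A^-1 are sub-bundles.\<close>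
definition almost_para_complex ::
  "('f::{comm_ring_1,real_algebra_1} \<Rightarrow> 'f) \<Rightarrow> ('f \<Rightarrow> 'a::ab_group_add \<Rightarrow> 'a) \<Rightarrow> ('a \<Rightarrow> 'a) \<Rightarrow> ('a \<Rightarrow> 'a) \<Rightarrow> bool" where
  "almost_para_complex ps sm ph K \<longleftrightarrow> bij K
     \<and> (\<forall>x y. ph (K (x + y)) = ph (K x) + ph (K y)) \<and> (\<forall>f x. ph (K (sm f x)) = sm f (ph (K x)))
     \<and> (\<forall>x. ph (K (ph (K x))) = x) \<and> (\<forall>x. ph (K x) = K (ph x))
     \<and> (\<exists>r. has_rank {x. ph (K x) = x} sm r \<and> has_rank {x. ph (K x) = - x} sm r)"

definition almost_para_hermitian ::
  "('f::{comm_ring_1,real_algebra_1} \<Rightarrow> 'f) \<Rightarrow> ('f \<Rightarrow> 'a::ab_group_add \<Rightarrow> 'a) \<Rightarrow> ('a \<Rightarrow> 'a) \<Rightarrow> ('a \<Rightarrow> 'a) \<Rightarrow> ('a \<Rightarrow> 'a \<Rightarrow> 'f) \<Rightarrow> bool" where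
  "almost_para_hermitian ps sm ph K g \<longleftrightarrow> almost_para_complex ps sm ph K \<and> pseudo_metric ps sm ph g
     \<and> (\<forall>x y. g (ph (K x)) (ph (K y)) = - g x y)"

definition para_Kahler ::
  "('f::{comm_ring_1,real_algebra_1} \<Rightarrow> 'f) \<Rightarrow> ('f \<Rightarrow> 'a::ab_group_add \<Rightarrow> 'a) \<Rightarrow> ('a \<Rightarrow> 'a)
     \<Rightarrow> ('a \<Rightarrow> 'a \<Rightarrow> 'a) \<Rightarrow> ('a \<Rightarrow> 'f \<Rightarrow> 'f) \<Rightarrow> ('a \<Rightarrow> 'a) \<Rightarrow> ('a \<Rightarrow> 'a \<Rightarrow> 'f) \<Rightarrow> ('a \<Rightarrow> 'a \<Rightarrow> 'a) \<Rightarrow> bool" where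
  "para_Kahler ps sm ph br an K g nb \<longleftrightarrow> hom_Lie_algebroid ps UNIV sm ph br an
     \<and> almost_para_hermitian ps sm ph K g \<and> hom_LC_connection ps sm ph br an g nb
     \<and> (\<forall>x y. nb x (ph (K y)) = ph (K (nb x y)))"

definition A1 :: "('a \<Rightarrow> 'a) \<Rightarrow> ('a \<Rightarrow> 'a) \<Rightarrow> 'a set" where
  "A1 ph K = {x. ph (K x) = x}"

definition dagger :: "('f::zero \<Rightarrow> 'f) \<Rightarrow> 's set \<Rightarrow> ('s \<Rightarrow> 's) \<Rightarrow> ('s \<Rightarrow> 'f) \<Rightarrow> ('s \<Rightarrow> 'f)" where
  "dagger ps S ph \<xi> = (\<lambda>e. if e \<in> S then ps (\<xi> (inv_into S ph e)) else 0)"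

definition dual_nabla :: "('f::{comm_ring_1,real_algebra_1} \<Rightarrow> 'f) \<Rightarrow> 'a set \<Rightarrow> ('a \<Rightarrow> 'a) \<Rightarrow> ('a \<Rightarrow> 'f \<Rightarrow> 'f)
     \<Rightarrow> ('a \<Rightarrow> 'a \<Rightarrow> 'a) \<Rightarrow> 'a \<Rightarrow> ('a \<Rightarrow> 'f) \<Rightarrow> ('a \<Rightarrow> 'f)" where
  "dual_nabla ps S ph an nb X \<xi> = (\<lambda>Y. if Y \<in> S then
       an (ph X) (\<xi> (inv_into S ph Y)) - ps (\<xi> (nb (inv_into S ph X) (inv_into S ph (inv_into S ph Y))))
     else 0)"

text \<open>Structures on A^1 (+) (A^1)^*, with sections modelled as pairs (X, alpha).\<close>
definition sum_carrier :: "'a::ab_group_add set \<Rightarrow> ('f::{comm_ring_1,real_algebra_1} \<Rightarrow> 'a \<Rightarrow> 'a) \<Rightarrow> ('a \<times> ('a \<Rightarrow> 'f)) set" where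
  "sum_carrier S sm = S \<times> dual_on S sm"

definition sum_smult :: "('f::times \<Rightarrow> 'a \<Rightarrow> 'a) \<Rightarrow> 'f \<Rightarrow> 'a \<times> ('a \<Rightarrow> 'f) \<Rightarrow> 'a \<times> ('a \<Rightarrow> 'f)" where
  "sum_smult sm f p = (sm f (fst p), \<lambda>y. f * snd p y)"

definition sum_phi :: "('f::zero \<Rightarrow> 'f) \<Rightarrow> 'a set \<Rightarrow> ('a \<Rightarrow> 'a) \<Rightarrow> 'a \<times> ('a \<Rightarrow> 'f) \<Rightarrow> 'a \<times> ('a \<Rightarrow> 'f)" where
  "sum_phi ps S ph p = (ph (fst p), dagger ps S ph (snd p))"

definition sum_bracket :: "('a \<Rightarrow> 'a \<Rightarrow> 'a) \<Rightarrow> ('a \<Rightarrow> ('a \<Rightarrow> 'f) \<Rightarrow> ('a \<Rightarrow> 'f::ab_group_add))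
     \<Rightarrow> 'a \<times> ('a \<Rightarrow> 'f) \<Rightarrow> 'a \<times> ('a \<Rightarrow> 'f) \<Rightarrow> 'a \<times> ('a \<Rightarrow> 'f)" where
  "sum_bracket br tn p q = (br (fst p) (fst q), \<lambda>y. tn (fst p) (snd q) y - tn (fst q) (snd p) y)"

definition sum_anchor :: "('a \<Rightarrow> 'f \<Rightarrow> 'f) \<Rightarrow> 'a \<times> ('a \<Rightarrow> 'f) \<Rightarrow> 'f \<Rightarrow> 'f" where
  "sum_anchor an p = an (fst p)"

end

theory Submission
  imports Defs
begin

text \<open>On the isotropic sub-bundle \<open>A\<^sup>1\<close> the hom-Levi-Civita connection is expressed by bracket
  and anchor alone: \<open>\<langle>\<nabla>\<^sub>x y, \<phi> z\<rangle> = a(\<phi> x)\<langle>y, z\<rangle> - \<langle>\<phi> y, [x, z]\<rangle>\<close>.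
  Iterating this formula, with \<open>\<nabla>\<close> commuting with \<open>\<phi>\<close> by uniqueness of the hom-Levi-Civita
  connection, turns the curvature of \<open>\<nabla>\<close> on \<open>A\<^sup>1\<close> into a Jacobiator, so \<open>\<nabla>\<close> is flat
  there. Hence \<open>X \<mapsto> \<nabla>\<^sub>X\<close> is a representation of \<open>A\<^sup>1\<close> on itself, its dual is a
  representation on \<open>(A\<^sup>1)\<^sup>*\<close>, and \<open>A\<^sup>1 \<oplus> (A\<^sup>1)\<^sup>*\<close> is the corresponding semidirect product,
  which is a hom-Lie algebroid for every representation on the dual hom-bundle.\<close>

lemma sum_fun_apply: "(\<Sum>j\<in>A. f j) y = (\<Sum>j\<in>A. f j y)"
  by (induct A rule: infinite_finite_induct) auto

lemma sum_lessThan_add: "(\<Sum>j<m + n. F j) = (\<Sum>j<m. F j) + (\<Sum>j<n. F (m + j))"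
  for m n :: nat
  by (induct n) (auto simp: add.assoc)

lemma add_self_eq_0_real_algebra:
  fixes u :: "'f::{comm_ring_1,real_algebra_1}"
  assumes "u + u = 0" shows "u = 0"
proof -
  have "u = (of_real (1/2) + of_real (1/2)) * u" by (simp add: of_real_add[symmetric])
  also have "\<dots> = of_real (1/2) * (u + u)" by (simp add: algebra_simps)
  finally show ?thesis by (simp add: assms)
qed

lemma phi_derivation_of_real:
  assumes D: "phi_derivation ps D" and "ps 1 = 1"
  shows "D (of_real c) = 0"
proof -
  have "D (1 * 1) = D 1 * ps 1 + ps 1 * D 1"
    using D unfolding phi_derivation_def by blast
  then have "D 1 = D 1 + D 1" using \<open>ps 1 = 1\<close> by simp
  then have "D 1 = 0" by simp
  have "D (of_real c * 1) = of_real c * D 1"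
    using D unfolding phi_derivation_def by blast
  then show ?thesis using \<open>D 1 = 0\<close> by simp
qed

lemma dual_onD:
  assumes "\<xi> \<in> dual_on S sm"
  shows dual_on_add: "x \<in> S \<Longrightarrow> y \<in> S \<Longrightarrow> \<xi> (x + y) = \<xi> x + \<xi> y"
    and dual_on_smult: "x \<in> S \<Longrightarrow> \<xi> (sm f x) = f * \<xi> x"
    and dual_on_outside: "x \<notin> S \<Longrightarrow> \<xi> x = 0"
  using assms by (auto simp: dual_on_def)

lemma dual_on_diff_apply:
  "\<xi> \<in> dual_on S sm \<Longrightarrow> x \<in> S \<Longrightarrow> y \<in> S \<Longrightarrow> x - y \<in> S \<Longrightarrow> \<xi> (x - y) = \<xi> x - \<xi> y"
  using dual_on_add[of \<xi> S sm "x - y" y] by (simp add: eq_diff_eq)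

lemma dual_on_zero: "0 \<in> dual_on S sm"
  and dual_on_plus: "\<xi> \<in> dual_on S sm \<Longrightarrow> \<eta> \<in> dual_on S sm \<Longrightarrow> \<xi> + \<eta> \<in> dual_on S sm"
  and dual_on_uminus: "\<xi> \<in> dual_on S sm \<Longrightarrow> - \<xi> \<in> dual_on S sm"
  and dual_on_diff: "\<xi> \<in> dual_on S sm \<Longrightarrow> \<eta> \<in> dual_on S sm \<Longrightarrow> \<xi> - \<eta> \<in> dual_on S sm"
  and dual_on_scale: "\<xi> \<in> dual_on S sm \<Longrightarrow> (\<lambda>y. f * \<xi> y) \<in> dual_on S sm"
  by (simp_all add: dual_on_def algebra_simps)

lemma module_onD:
  assumes "module_on S sm"
  shows module_on_zero: "0 \<in> S"
    and module_on_add: "x \<in> S \<Longrightarrow> y \<in> S \<Longrightarrow> x + y \<in> S"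
    and module_on_uminus: "x \<in> S \<Longrightarrow> - x \<in> S"
    and module_on_smult: "x \<in> S \<Longrightarrow> sm f x \<in> S"
    and module_on_smult_add_right: "x \<in> S \<Longrightarrow> y \<in> S \<Longrightarrow> sm f (x + y) = sm f x + sm f y"
    and module_on_smult_add_left: "x \<in> S \<Longrightarrow> sm (f + g) x = sm f x + sm g x"
    and module_on_smult_mult: "x \<in> S \<Longrightarrow> sm (f * g) x = sm f (sm g x)"
    and module_on_smult_one: "x \<in> S \<Longrightarrow> sm 1 x = x"
  using assms by (auto simp: module_on_def)

lemma module_on_smult_zero: "module_on S sm \<Longrightarrow> sm f 0 = 0"
  by (metis add_cancel_right_right module_on_smult_add_right module_on_zero)

lemma module_on_sum: "module_on S sm \<Longrightarrow> (\<And>j. j \<in> A \<Longrightarrow> u j \<in> S) \<Longrightarrow> (\<Sum>j\<in>A. u j) \<in> S"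
  by (induct A rule: infinite_finite_induct) (auto intro: module_on_zero module_on_add)

lemma dual_on_sum:
  assumes M: "module_on S sm" and \<xi>: "\<xi> \<in> dual_on S sm" and u: "\<And>j. j \<in> A \<Longrightarrow> u j \<in> S"
    and "finite A"
  shows "\<xi> (\<Sum>j\<in>A. u j) = (\<Sum>j\<in>A. \<xi> (u j))"
  using \<open>finite A\<close> u
proof (induct A rule: finite_induct)
  case empty
  have "\<xi> 0 = \<xi> 0 + \<xi> 0" using dual_on_add[OF \<xi>] module_on_zero[OF M] by (metis add_0)
  then show ?case by simp
next
  case (insert j A)
  then show ?case by (simp add: dual_on_add[OF \<xi>] module_on_sum[OF M])
qed

lemma module_on_sum_carrier:
  assumes M: "module_on S sm"
  shows "module_on (sum_carrier S sm) (sum_smult sm)"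
  unfolding module_on_def sum_carrier_def sum_smult_def
proof (intro conjI ballI allI)
  show "0 \<in> S \<times> dual_on S sm" using M by (simp add: module_on_zero dual_on_zero zero_prod_def)
  show "x + y \<in> S \<times> dual_on S sm" if "x \<in> S \<times> dual_on S sm" "y \<in> S \<times> dual_on S sm" for x y
    using that by (auto simp: module_on_add[OF M] dual_on_plus)
  show "- x \<in> S \<times> dual_on S sm" if "x \<in> S \<times> dual_on S sm" for x
    using that by (auto simp: module_on_uminus[OF M] dual_on_uminus)
  show "(sm f (fst x), \<lambda>y. f * snd x y) \<in> S \<times> dual_on S sm" if "x \<in> S \<times> dual_on S sm" for f x
    using that by (auto simp: module_on_smult[OF M] dual_on_scale)
qed (auto simp: module_onD[OF M] module_on_smult_zero[OF M] algebra_simps fun_eq_iff)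

lemma sum_carrier_iff: "p \<in> sum_carrier S sm \<longleftrightarrow> fst p \<in> S \<and> snd p \<in> dual_on S sm"
  by (cases p) (simp add: sum_carrier_def)

text \<open>A dual basis \<open>(e\<^sub>j, \<eta>\<^sub>j)\<close> of \<open>S\<close> yields the dual basis \<open>(e\<^sub>j, 0), (0, \<eta>\<^sub>j)\<close> of
  \<open>S \<times> S\<^sup>*\<close> with coordinate functionals \<open>\<eta>\<^sub>j \<circ> fst\<close> and \<open>(X, \<alpha>) \<mapsto> \<alpha> e\<^sub>j\<close>.\<close>
lemma has_rank_sum_carrier:
  assumes M: "module_on S sm" and "has_rank S sm r"
  shows "has_rank (sum_carrier S sm) (sum_smult sm) (r + r)"
proof -
  let ?C = "sum_carrier S sm"
  obtain n :: nat and e \<eta> where basis: "\<And>j. j < n \<Longrightarrow> e j \<in> S \<and> \<eta> j \<in> dual_on S sm"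
    and repr: "\<And>x. x \<in> S \<Longrightarrow> x = (\<Sum>j<n. sm (\<eta> j x) (e j))"
    and r: "r = (\<Sum>j<n. \<eta> j (e j))"
    using \<open>has_rank S sm r\<close> unfolding has_rank_def by blast
  define G where "G j = (if j < n then (e j, 0) else (0, \<eta> (j - n)))" for j
  define E where "E j p = (if p \<in> ?C then if j < n then \<eta> j (fst p) else snd p (e (j - n)) else 0)"
    for j p
  have G_in: "G j \<in> ?C" if "j < n + n" for j
    using that basis[of j] basis[of "j - n"] module_on_zero[OF M]
    by (auto simp: G_def sum_carrier_iff dual_on_zero)
  have C_add: "p + q \<in> ?C" if "p \<in> ?C" "q \<in> ?C" for p q
    using module_on_add[OF module_on_sum_carrier[OF M] that] .
  have C_smult: "sum_smult sm f p \<in> ?C" if "p \<in> ?C" for f p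
    using module_on_smult[OF module_on_sum_carrier[OF M] that] .
  have E_dual: "E j \<in> dual_on ?C (sum_smult sm)" if "j < n + n" for j
    unfolding dual_on_def[of ?C] mem_Collect_eq
  proof (intro conjI ballI allI impI)
    have e: "e (j - n) \<in> S" if "\<not> j < n" using basis \<open>j < n + n\<close> that by simp
    show "E j (p + q) = E j p + E j q" if "p \<in> ?C" "q \<in> ?C" for p q
      using that basis[of j] e C_add by (auto simp: E_def sum_carrier_iff dual_on_add)
    show "E j (sum_smult sm f p) = f * E j p" if "p \<in> ?C" for f p
      using that basis[of j] e C_smult by (auto simp: E_def sum_carrier_iff sum_smult_def dual_on_smult)
  qed (simp add: E_def)
  have E_repr: "p = (\<Sum>j<n + n. sum_smult sm (E j p) (G j))" if p: "p \<in> ?C" for p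
  proof -
    obtain x \<alpha> where p_eq: "p = (x, \<alpha>)" and x: "x \<in> S" and \<alpha>: "\<alpha> \<in> dual_on S sm"
      using p by (cases p) (auto simp: sum_carrier_iff)
    have \<alpha>_repr: "\<alpha> y = (\<Sum>j<n. \<alpha> (e j) * \<eta> j y)" for y
    proof (cases "y \<in> S")
      case True
      have "\<alpha> y = \<alpha> (\<Sum>j<n. sm (\<eta> j y) (e j))"
        using repr[OF True] by (rule arg_cong)
      also have "\<dots> = (\<Sum>j<n. \<alpha> (sm (\<eta> j y) (e j)))"
        using basis by (intro dual_on_sum[OF M \<alpha>]) (auto intro: module_on_smult[OF M])
      also have "\<dots> = (\<Sum>j<n. \<alpha> (e j) * \<eta> j y)"
        using basis by (intro sum.cong) (auto simp: dual_on_smult[OF \<alpha>] mult.commute)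
      finally show ?thesis .
    next
      case False
      then have "\<eta> j y = 0" if "j < n" for j using basis that dual_on_outside by blast
      then show ?thesis using False \<alpha> by (simp add: dual_on_outside)
    qed
    have "(\<Sum>j<n + n. sum_smult sm (E j p) (G j))
        = (\<Sum>j<n. sum_smult sm (E j p) (G j)) + (\<Sum>j<n. sum_smult sm (E (n + j) p) (G (n + j)))"
      by (rule sum_lessThan_add)
    also have "(\<Sum>j<n. sum_smult sm (E j p) (G j)) = (\<Sum>j<n. (sm (\<eta> j x) (e j), 0))"
      using p by (intro sum.cong) (simp_all add: E_def G_def p_eq sum_smult_def zero_fun_def)
    also have "(\<Sum>j<n. sum_smult sm (E (n + j) p) (G (n + j))) = (\<Sum>j<n. (0, \<lambda>y. \<alpha> (e j) * \<eta> j y))"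
      using p by (intro sum.cong) (simp_all add: E_def G_def p_eq sum_smult_def module_on_smult_zero[OF M])
    also have "(\<Sum>j<n. (sm (\<eta> j x) (e j), 0)) + (\<Sum>j<n. (0, \<lambda>y. \<alpha> (e j) * \<eta> j y)) = (x, \<alpha>)"
      by (simp add: prod_eq_iff fst_sum snd_sum fun_eq_iff sum_fun_apply flip: \<alpha>_repr repr[OF x])
    finally show ?thesis by (simp add: p_eq)
  qed
  have E_G: "r + r = (\<Sum>j<n + n. E j (G j))"
  proof -
    have "E j (G j) = \<eta> j (e j)" "E (n + j) (G (n + j)) = \<eta> j (e j)" if "j < n" for j
      using G_in[of j] G_in[of "n + j"] that by (simp_all add: E_def G_def)
    then show ?thesis unfolding sum_lessThan_add r by simp
  qed
  show ?thesis
    unfolding has_rank_def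
  proof (intro exI[where x="n + n"] exI[where x=G] exI[where x=E] conjI allI impI ballI)
    show "G j \<in> ?C" "E j \<in> dual_on ?C (sum_smult sm)" if "j < n + n" for j
      using that by (simp_all add: G_in E_dual)
  qed (fact E_repr E_G)+
qed

lemma sum_smult_pair: "sum_smult sm f (x, \<alpha>) = (sm f x, \<lambda>y. f * \<alpha> y)"
  by (simp add: sum_smult_def)

lemma sum_phi_pair: "sum_phi ps S ph (x, \<alpha>) = (ph x, dagger ps S ph \<alpha>)"
  by (simp add: sum_phi_def)

lemma sum_bracket_pair: "sum_bracket br tn (x, \<alpha>) (y, \<beta>) = (br x y, tn x \<beta> - tn y \<alpha>)"
  by (simp add: sum_bracket_def fun_diff_def)

lemma sum_anchor_pair: "sum_anchor an (x, \<alpha>) = an x"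
  by (simp add: sum_anchor_def)

locale hom_bundle_on =
  fixes ps :: "'f::{comm_ring_1,real_algebra_1} \<Rightarrow> 'f" and S :: "'s::ab_group_add set"
    and sm :: "'f \<Rightarrow> 's \<Rightarrow> 's" and ph :: "'s \<Rightarrow> 's"
  assumes hom_bundle: "hom_bundle ps S sm ph"
begin

lemma ralg_aut: "ralg_aut ps"
  and module: "module_on S sm"
  and has_rank_ex: "\<exists>r. has_rank S sm r"
  and ph_bij_betw: "bij_betw ph S S"
  and ph_add: "x \<in> S \<Longrightarrow> y \<in> S \<Longrightarrow> ph (x + y) = ph x + ph y"
  and ph_smult: "x \<in> S \<Longrightarrow> ph (sm f x) = sm (ps f) (ph x)"
  using hom_bundle by (simp_all add: hom_bundle_def vector_bundle_def)

lemma ps_add [simp]: "ps (f + g) = ps f + ps g"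
  and ps_mult [simp]: "ps (f * g) = ps f * ps g"
  and ps_one [simp]: "ps 1 = 1"
  and ps_of_real [simp]: "ps (of_real c) = of_real c"
  and ps_bij: "bij ps"
  using ralg_aut by (simp_all add: ralg_aut_def)

lemma ps_inv_ps [simp]: "ps (inv ps f) = f" and inv_ps_ps [simp]: "inv ps (ps f) = f"
  using ps_bij by (simp_all add: bij_is_inj bij_is_surj surj_f_inv_f)

lemma ps_eq_iff [simp]: "ps f = ps f' \<longleftrightarrow> f = f'"
  by (metis inv_ps_ps)

lemma inv_ps_add [simp]: "inv ps (f + g) = inv ps f + inv ps g"
  and inv_ps_mult [simp]: "inv ps (f * g) = inv ps f * inv ps g"
  using inv_ps_ps[of "inv ps f + inv ps g"] inv_ps_ps[of "inv ps f * inv ps g"] by simp_all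

lemma ps_zero [simp]: "ps 0 = 0"
  using ps_add[of 0 0] by simp

lemma ps_diff [simp]: "ps (f - g) = ps f - ps g"
  using ps_add[of "f - g" g] by (simp add: eq_diff_eq)

lemma ph_in [simp]: "x \<in> S \<Longrightarrow> ph x \<in> S"
  using ph_bij_betw by (meson bij_betwE)

lemma inv_into_ph_in [simp]: "x \<in> S \<Longrightarrow> inv_into S ph x \<in> S"
  using bij_betw_inv_into[OF ph_bij_betw] by (meson bij_betwE)

lemma ph_inv_into [simp]: "x \<in> S \<Longrightarrow> ph (inv_into S ph x) = x"
  using ph_bij_betw by (simp add: bij_betw_inv_into_right)

lemma inv_into_ph [simp]: "x \<in> S \<Longrightarrow> inv_into S ph (ph x) = x"
  using ph_bij_betw by (simp add: bij_betw_inv_into_left)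

lemma inv_into_ph_add:
  assumes "x \<in> S" "y \<in> S" shows "inv_into S ph (x + y) = inv_into S ph x + inv_into S ph y"
proof -
  have "x + y = ph (inv_into S ph x + inv_into S ph y)"
    using assms by (simp add: ph_add)
  then show ?thesis
    using assms module by (simp add: module_on_add)
qed

lemma inv_into_ph_smult:
  assumes "x \<in> S" shows "inv_into S ph (sm f x) = sm (inv ps f) (inv_into S ph x)"
proof -
  have "sm f x = ph (sm (inv ps f) (inv_into S ph x))"
    using assms by (simp add: ph_smult)
  then show ?thesis
    using assms module by (simp add: module_on_smult)
qed

lemma dagger_dual_on: "\<xi> \<in> dual_on S sm \<Longrightarrow> dagger ps S ph \<xi> \<in> dual_on S sm"
  using module unfolding dual_on_def[of S sm]
  by (auto simp: dagger_def inv_into_ph_add inv_into_ph_smult module_on_add module_on_smult)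

lemma bij_betw_dagger: "bij_betw (dagger ps S ph) (dual_on S sm) (dual_on S sm)"
proof (rule bij_betw_byWitness[where f'="\<lambda>\<xi> e. if e \<in> S then inv ps (\<xi> (ph e)) else 0"])
  show "\<forall>\<xi>\<in>dual_on S sm. (\<lambda>e. if e \<in> S then inv ps (dagger ps S ph \<xi> (ph e)) else 0) = \<xi>"
    by (auto simp: dagger_def fun_eq_iff dual_on_outside)
  show "\<forall>\<xi>\<in>dual_on S sm. dagger ps S ph (\<lambda>e. if e \<in> S then inv ps (\<xi> (ph e)) else 0) = \<xi>"
    by (auto simp: dagger_def fun_eq_iff dual_on_outside)
  show "dagger ps S ph ` dual_on S sm \<subseteq> dual_on S sm"
    using dagger_dual_on by blast
  show "(\<lambda>\<xi> e. if e \<in> S then inv ps (\<xi> (ph e)) else 0) ` dual_on S sm \<subseteq> dual_on S sm"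
    using module unfolding dual_on_def[of S sm]
    by (auto simp: ph_add ph_smult module_on_add module_on_smult)
qed

lemma dagger_plus: "dagger ps S ph (\<xi> + \<eta>) = dagger ps S ph \<xi> + dagger ps S ph \<eta>"
  and dagger_diff: "dagger ps S ph (\<xi> - \<eta>) = dagger ps S ph \<xi> - dagger ps S ph \<eta>"
  and dagger_scale: "dagger ps S ph (\<lambda>y. f * \<xi> y) = (\<lambda>y. ps f * dagger ps S ph \<xi> y)"
  by (simp_all add: dagger_def fun_eq_iff)

lemma hom_bundle_sum_carrier: "hom_bundle ps (sum_carrier S sm) (sum_smult sm) (sum_phi ps S ph)"
  unfolding hom_bundle_def vector_bundle_def
proof (intro conjI ballI allI)
  obtain r where "has_rank S sm r" using has_rank_ex ..
  then show "\<exists>r. has_rank (sum_carrier S sm) (sum_smult sm) r"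
    using has_rank_sum_carrier[OF module] by blast
  have "sum_phi ps S ph = map_prod ph (dagger ps S ph)"
    by (simp add: fun_eq_iff sum_phi_def)
  then show "bij_betw (sum_phi ps S ph) (sum_carrier S sm) (sum_carrier S sm)"
    using bij_betw_map_prod[OF ph_bij_betw bij_betw_dagger] by (simp add: sum_carrier_def)
  show "sum_phi ps S ph (p + q) = sum_phi ps S ph p + sum_phi ps S ph q"
    if "p \<in> sum_carrier S sm" "q \<in> sum_carrier S sm" for p q
    using that by (simp add: sum_phi_def sum_carrier_iff ph_add dagger_plus)
  show "sum_phi ps S ph (sum_smult sm f p) = sum_smult sm (ps f) (sum_phi ps S ph p)"
    if "p \<in> sum_carrier S sm" for f p
    using that by (simp add: sum_phi_def sum_smult_def sum_carrier_iff ph_smult dagger_scale)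
qed (fact ralg_aut module_on_sum_carrier[OF module])+

end

section \<open>Semidirect products with a representation on the dual\<close>

locale hom_Lie_algebroid_on =
  fixes ps :: "'f::{comm_ring_1,real_algebra_1} \<Rightarrow> 'f" and S :: "'s::ab_group_add set"
    and sm :: "'f \<Rightarrow> 's \<Rightarrow> 's" and ph :: "'s \<Rightarrow> 's"
    and br :: "'s \<Rightarrow> 's \<Rightarrow> 's" and an :: "'s \<Rightarrow> 'f \<Rightarrow> 'f"
  assumes hom_Lie_algebroid: "hom_Lie_algebroid ps S sm ph br an"
begin

sublocale hom_bundle_on ps S sm ph
  using hom_Lie_algebroid by unfold_locales (simp add: hom_Lie_algebroid_def)

lemma br_in: "x \<in> S \<Longrightarrow> y \<in> S \<Longrightarrow> br x y \<in> S"
  and br_add_left: "x \<in> S \<Longrightarrow> y \<in> S \<Longrightarrow> z \<in> S \<Longrightarrow> br (x + y) z = br x z + br y z"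
  and br_of_real_left: "x \<in> S \<Longrightarrow> y \<in> S \<Longrightarrow> br (sm (of_real c) x) y = sm (of_real c) (br x y)"
  and br_skew: "x \<in> S \<Longrightarrow> y \<in> S \<Longrightarrow> br x y = - br y x"
  and br_ph: "x \<in> S \<Longrightarrow> y \<in> S \<Longrightarrow> ph (br x y) = br (ph x) (ph y)"
  and br_Jacobi: "x \<in> S \<Longrightarrow> y \<in> S \<Longrightarrow> z \<in> S \<Longrightarrow>
         br (ph x) (br y z) + br (ph y) (br z x) + br (ph z) (br x y) = 0"
  and an_derivation: "x \<in> S \<Longrightarrow> phi_derivation ps (an x)"
  and an_add: "x \<in> S \<Longrightarrow> y \<in> S \<Longrightarrow> an (x + y) = (\<lambda>g. an x g + an y g)"
  and an_smult: "x \<in> S \<Longrightarrow> an (sm f x) = (\<lambda>g. f * an x g)"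
  using hom_Lie_algebroid unfolding hom_Lie_algebroid_def by - (elim conjE, blast)+

lemma br_smult_right: "x \<in> S \<Longrightarrow> y \<in> S \<Longrightarrow> br x (sm f y) = sm (ps f) (br x y) + sm (an (ph x) f) (ph y)"
  using hom_Lie_algebroid unfolding hom_Lie_algebroid_def by (elim conjE) metis

lemma an_ps: "x \<in> S \<Longrightarrow> ps (an x f) = an (ph x) (ps f)"
  using hom_Lie_algebroid unfolding hom_Lie_algebroid_def by (elim conjE) metis

lemma an_br: "x \<in> S \<Longrightarrow> y \<in> S \<Longrightarrow> an (br x y) (ps f) = an (ph x) (an y f) - an (ph y) (an x f)"
  using hom_Lie_algebroid unfolding hom_Lie_algebroid_def by (elim conjE) metis

lemma an_of_real: "x \<in> S \<Longrightarrow> an x (of_real c) = 0"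
  using phi_derivation_of_real[OF an_derivation] by simp

lemma an_plus_right: "x \<in> S \<Longrightarrow> an x (f + h) = an x f + an x h"
  and an_times_right: "x \<in> S \<Longrightarrow> an x (f * h) = an x f * ps h + ps f * an x h"
  using an_derivation by (simp_all add: phi_derivation_def)

lemma an_diff_right: "x \<in> S \<Longrightarrow> an x (f - h) = an x f - an x h"
  using an_plus_right[of x "f - h" h] by (simp add: eq_diff_eq)

lemma br_uminus_left: "x \<in> S \<Longrightarrow> y \<in> S \<Longrightarrow> br (- x) y = - br x y"
  using br_add_left[of x "- x" y] br_add_left[of 0 0 y] module
  by (simp add: module_on_uminus module_on_zero add_eq_0_iff)

lemma br_uminus_right: "x \<in> S \<Longrightarrow> y \<in> S \<Longrightarrow> br x (- y) = - br x y"
  using br_skew[of x "- y"] br_uminus_left[of y x] br_skew[of y x] module by (simp add: module_on_uminus)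

lemma hom_Lie_algebroid_subbundle:
  assumes "T \<subseteq> S" and T_module: "0 \<in> T" "\<And>x y. x \<in> T \<Longrightarrow> y \<in> T \<Longrightarrow> x + y \<in> T"
      "\<And>x. x \<in> T \<Longrightarrow> - x \<in> T" "\<And>f x. x \<in> T \<Longrightarrow> sm f x \<in> T"
    and T_br: "\<And>x y. x \<in> T \<Longrightarrow> y \<in> T \<Longrightarrow> br x y \<in> T"
    and "bij_betw ph T T" and "has_rank T sm r"
  shows "hom_Lie_algebroid ps T sm ph br an"
proof -
  have in_S: "x \<in> S" if "x \<in> T" for x using that \<open>T \<subseteq> S\<close> by blast
  have "module_on T sm"
    unfolding module_on_def
    using T_module by (intro conjI ballI allI) (simp_all add: in_S module_onD[OF module])
  then have "hom_bundle ps T sm ph"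
    unfolding hom_bundle_def vector_bundle_def
    using ralg_aut \<open>bij_betw ph T T\<close> \<open>has_rank T sm r\<close>
    by (intro conjI ballI allI exI) (simp_all add: in_S ph_add ph_smult)
  then show ?thesis
    unfolding hom_Lie_algebroid_def
  proof (intro conjI ballI allI)
    show "br x y = - br y x" if "x \<in> T" "y \<in> T" for x y
      using that by (intro br_skew in_S)
  qed (simp_all add: in_S T_br br_add_left br_of_real_left br_ph br_Jacobi an_derivation an_add
      an_smult br_smult_right an_ps an_br)
qed

end

locale hom_dual_representation = hom_Lie_algebroid_on ps S sm ph br an
  for ps :: "'f::{comm_ring_1,real_algebra_1} \<Rightarrow> 'f" and S :: "'s::ab_group_add set"
    and sm ph br an +
  fixes \<rho> :: "'s \<Rightarrow> ('s \<Rightarrow> 'f) \<Rightarrow> ('s \<Rightarrow> 'f)"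
  assumes rho_dual: "x \<in> S \<Longrightarrow> \<xi> \<in> dual_on S sm \<Longrightarrow> \<rho> x \<xi> \<in> dual_on S sm"
    and rho_add_left: "x \<in> S \<Longrightarrow> y \<in> S \<Longrightarrow> \<xi> \<in> dual_on S sm \<Longrightarrow> \<rho> (x + y) \<xi> = \<rho> x \<xi> + \<rho> y \<xi>"
    and rho_smult_left: "x \<in> S \<Longrightarrow> \<xi> \<in> dual_on S sm \<Longrightarrow> \<rho> (sm f x) \<xi> = (\<lambda>y. ps f * \<rho> x \<xi> y)"
    and rho_add_right: "x \<in> S \<Longrightarrow> \<xi> \<in> dual_on S sm \<Longrightarrow> \<eta> \<in> dual_on S sm \<Longrightarrow>
         \<rho> x (\<xi> + \<eta>) = \<rho> x \<xi> + \<rho> x \<eta>"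
    and rho_scale_right: "x \<in> S \<Longrightarrow> \<xi> \<in> dual_on S sm \<Longrightarrow>
         \<rho> x (\<lambda>y. f * \<xi> y) = (\<lambda>y. ps f * \<rho> x \<xi> y + an (ph x) f * dagger ps S ph \<xi> y)"
    and dagger_rho: "x \<in> S \<Longrightarrow> \<xi> \<in> dual_on S sm \<Longrightarrow>
         dagger ps S ph (\<rho> x \<xi>) = \<rho> (ph x) (dagger ps S ph \<xi>)"
    and rho_br: "x \<in> S \<Longrightarrow> y \<in> S \<Longrightarrow> \<xi> \<in> dual_on S sm \<Longrightarrow>
         \<rho> (br x y) (dagger ps S ph \<xi>) = \<rho> (ph x) (\<rho> y \<xi>) - \<rho> (ph y) (\<rho> x \<xi>)"
begin

lemma rho_diff_right:
  assumes "x \<in> S" "\<xi> \<in> dual_on S sm" "\<eta> \<in> dual_on S sm"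
  shows "\<rho> x (\<xi> - \<eta>) = \<rho> x \<xi> - \<rho> x \<eta>"
  using rho_add_right[OF assms(1) dual_on_diff[OF assms(2,3)] assms(3)] by (simp add: eq_diff_eq)

lemma rho_of_real_right:
  "x \<in> S \<Longrightarrow> \<xi> \<in> dual_on S sm \<Longrightarrow> \<rho> x (\<lambda>y. of_real c * \<xi> y) = (\<lambda>y. of_real c * \<rho> x \<xi> y)"
  by (simp add: rho_scale_right an_of_real)

lemma sum_bracket_Jacobi:
  assumes "p \<in> sum_carrier S sm" "q \<in> sum_carrier S sm" "r \<in> sum_carrier S sm"
  shows "sum_bracket br \<rho> (sum_phi ps S ph p) (sum_bracket br \<rho> q r)
       + sum_bracket br \<rho> (sum_phi ps S ph q) (sum_bracket br \<rho> r p)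
       + sum_bracket br \<rho> (sum_phi ps S ph r) (sum_bracket br \<rho> p q) = 0"
proof -
  obtain x \<alpha> y \<beta> z \<gamma> where pqr: "p = (x, \<alpha>)" "q = (y, \<beta>)" "r = (z, \<gamma>)"
    and xyz: "x \<in> S" "y \<in> S" "z \<in> S"
    and \<alpha>\<beta>\<gamma>: "\<alpha> \<in> dual_on S sm" "\<beta> \<in> dual_on S sm" "\<gamma> \<in> dual_on S sm"
    using assms by (auto simp: sum_carrier_def)
  have "\<rho> (ph x) (\<rho> y \<gamma> - \<rho> z \<beta>) - \<rho> (br y z) (dagger ps S ph \<alpha>)
      + (\<rho> (ph y) (\<rho> z \<alpha> - \<rho> x \<gamma>) - \<rho> (br z x) (dagger ps S ph \<beta>))
      + (\<rho> (ph z) (\<rho> x \<beta> - \<rho> y \<alpha>) - \<rho> (br x y) (dagger ps S ph \<gamma>)) = 0"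
    using xyz \<alpha>\<beta>\<gamma> by (simp add: rho_diff_right rho_dual rho_br)
  moreover have "br (ph x) (br y z) + br (ph y) (br z x) + br (ph z) (br x y) = 0"
    using xyz by (rule br_Jacobi)
  ultimately show ?thesis
    by (simp add: pqr sum_bracket_pair sum_phi_pair zero_prod_def)
qed

lemma hom_Lie_algebroid_semidirect:
  "hom_Lie_algebroid ps (sum_carrier S sm) (sum_smult sm) (sum_phi ps S ph) (sum_bracket br \<rho>) (sum_anchor an)"
  unfolding hom_Lie_algebroid_def
proof (intro conjI ballI allI)
  let ?C = "sum_carrier S sm"
  show "hom_bundle ps ?C (sum_smult sm) (sum_phi ps S ph)"
    by (rule hom_bundle_sum_carrier)
  show "sum_bracket br \<rho> p q \<in> ?C" if "p \<in> ?C" "q \<in> ?C" for p q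
    using that by (auto simp: sum_carrier_def sum_bracket_pair br_in rho_dual dual_on_diff)
  show "sum_bracket br \<rho> (p + q) r = sum_bracket br \<rho> p r + sum_bracket br \<rho> q r"
    if "p \<in> ?C" "q \<in> ?C" "r \<in> ?C" for p q r
    using that by (auto simp: sum_carrier_def sum_bracket_pair br_add_left rho_add_left rho_add_right)
  show "sum_bracket br \<rho> (sum_smult sm (of_real c) p) q = sum_smult sm (of_real c) (sum_bracket br \<rho> p q)"
    if "p \<in> ?C" "q \<in> ?C" for c p q
    using that by (auto simp: sum_carrier_def sum_bracket_pair sum_smult_pair br_of_real_left
        rho_smult_left rho_of_real_right fun_eq_iff right_diff_distrib)
  show "sum_bracket br \<rho> p q = - sum_bracket br \<rho> q p" if p: "p \<in> ?C" and q: "q \<in> ?C" for p q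
  proof -
    obtain x \<alpha> y \<beta> where "p = (x, \<alpha>)" "q = (y, \<beta>)" "x \<in> S" "y \<in> S"
      using p q unfolding sum_carrier_def by blast
    then show ?thesis by (simp add: sum_bracket_pair br_skew[of x y])
  qed
  show "sum_phi ps S ph (sum_bracket br \<rho> p q) = sum_bracket br \<rho> (sum_phi ps S ph p) (sum_phi ps S ph q)"
    if "p \<in> ?C" "q \<in> ?C" for p q
    using that by (auto simp: sum_carrier_def sum_bracket_pair sum_phi_pair br_ph dagger_diff dagger_rho)
  show "sum_bracket br \<rho> (sum_phi ps S ph p) (sum_bracket br \<rho> q r)
      + sum_bracket br \<rho> (sum_phi ps S ph q) (sum_bracket br \<rho> r p)
      + sum_bracket br \<rho> (sum_phi ps S ph r) (sum_bracket br \<rho> p q) = 0"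
    if "p \<in> ?C" "q \<in> ?C" "r \<in> ?C" for p q r
    using that by (rule sum_bracket_Jacobi)
  show "sum_bracket br \<rho> p (sum_smult sm f q)
      = sum_smult sm (ps f) (sum_bracket br \<rho> p q) + sum_smult sm (sum_anchor an (sum_phi ps S ph p) f) (sum_phi ps S ph q)"
    if "p \<in> ?C" "q \<in> ?C" for f p q
    using that by (auto simp: sum_carrier_def sum_bracket_pair sum_smult_pair sum_phi_pair sum_anchor_pair
        br_smult_right rho_smult_left rho_scale_right fun_eq_iff algebra_simps)
qed (auto simp: sum_carrier_def sum_anchor_pair sum_smult_pair sum_phi_pair sum_bracket_pair
    an_derivation an_add an_smult an_ps an_br)

end

section \<open>The hom-Levi-Civita connection\<close>

locale pseudo_Riemannian_algebroid = hom_Lie_algebroid_on ps UNIV sm ph br an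
  for ps :: "'f::{comm_ring_1,real_algebra_1} \<Rightarrow> 'f" and sm :: "'f \<Rightarrow> 'a::ab_group_add \<Rightarrow> 'a"
    and ph br an +
  fixes g :: "'a \<Rightarrow> 'a \<Rightarrow> 'f" and nb :: "'a \<Rightarrow> 'a \<Rightarrow> 'a"
  assumes pseudo_metric: "pseudo_metric ps sm ph g"
    and Levi_Civita: "hom_LC_connection ps sm ph br an g nb"
begin

declare ph_add [simp] ph_smult [simp] inv_into_ph_add [simp] inv_into_ph_smult [simp]

lemma ph_zero [simp]: "ph 0 = 0"
  using ph_add[of 0 0] by simp

lemma ph_uminus [simp]: "ph (- x) = - ph x"
  using ph_add[of x "- x"] by (simp add: minus_unique)

lemma ph_diff [simp]: "ph (x - y) = ph x - ph y"
  by (simp add: diff_conv_add_uminus del: add_uminus_conv_diff)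

lemma inv_ph_diff [simp]: "inv ph (x - y) = inv ph x - inv ph y"
  using inv_into_ph[of "inv ph x - inv ph y"] by simp

lemma ph_eq_iff [simp]: "ph x = ph y \<longleftrightarrow> x = y"
  by (metis inv_into_ph UNIV_I)

lemma g_sym: "g x y = g y x"
  and g_dual: "g x \<in> dual_on UNIV sm"
  and g_inj: "inj g"
  and g_ph: "g (ph x) (ph y) = ps (g x y)"
  using pseudo_metric by (simp_all add: pseudo_metric_def bij_betw_def)

lemma g_add_right [simp]: "g x (y + z) = g x y + g x z"
  and g_smult_right [simp]: "g x (sm f y) = f * g x y"
  using g_dual by (simp_all add: dual_on_def)

lemma g_add_left [simp]: "g (y + z) x = g y x + g z x"
  by (simp add: g_sym[of _ x])

lemma g_zero_right [simp]: "g x 0 = 0" and g_diff_right [simp]: "g x (y - z) = g x y - g x z"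
  using g_add_right[of x 0 0] g_add_right[of x "y - z" z] by (simp_all add: eq_diff_eq)

lemma g_zero_left [simp]: "g 0 x = 0" and g_diff_left [simp]: "g (y - z) x = g y x - g z x"
  by (simp_all add: g_sym[of _ x])

lemma g_nondegenerate: "(\<And>w. g x w = 0) \<Longrightarrow> x = 0"
  using g_inj by (metis g_zero_left inj_eq ext)

lemma nb_add_left: "nb (x + y) z = nb x z + nb y z"
  and nb_add_right: "nb x (y + z) = nb x y + nb x z"
  and nb_smult_left: "nb (sm f x) y = sm (ps f) (nb x y)"
  and nb_smult_right: "nb x (sm f y) = sm (ps f) (nb x y) + sm (an (ph x) f) (ph y)"
  and nb_torsion_free: "br x y = nb x y - nb y x"
  and nb_metric: "an (ph x) (g y z) = g (nb x y) (ph z) + g (ph y) (nb x z)"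
  using Levi_Civita unfolding hom_LC_connection_def by (elim conjE; metis)+

lemma Levi_Civita_unique:
  assumes torsion: "\<And>x y. nb' x y - nb' y x = br x y"
    and metric: "\<And>x y z. an (ph x) (g y z) = g (nb' x y) (ph z) + g (ph y) (nb' x z)"
  shows "nb' = nb"
proof -
  define T where "T x y z = g (nb x y - nb' x y) (ph z)" for x y z
  have symmetric: "T x y z = T y x z" for x y z
  proof -
    have "nb x y - nb y x = nb' x y - nb' y x"
      using nb_torsion_free[of x y] torsion[of x y] by simp
    then have "nb x y - nb' x y = nb y x - nb' y x"
      by (simp add: algebra_simps)
    then show ?thesis unfolding T_def by simp
  qed
  have antisymmetric: "T x y z = - T x z y" for x y z
    using nb_metric[of x y z] metric[of x y z] unfolding T_def by (simp add: g_sym[of "ph y"] algebra_simps)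
  have "T x y z = - T x y z" for x y z
    by (metis antisymmetric symmetric)
  then have "T x y z = 0" for x y z
    by (simp add: add_self_eq_0_real_algebra eq_neg_iff_add_eq_0)
  then have "g (nb x y - nb' x y) w = 0" for x y w
    unfolding T_def by (metis ph_inv_into UNIV_I)
  then have "nb x y - nb' x y = 0" for x y
    by (intro g_nondegenerate)
  then show ?thesis
    by (intro ext) (simp add: right_minus_eq)
qed

text \<open>The conjugate \<open>\<phi>\<^sup>-\<^sup>1 \<circ> \<nabla>\<^bsub>\<phi> x\<^esub> \<circ> \<phi>\<close> is again torsion free and metric.\<close>
lemma nb_ph: "nb (ph x) (ph y) = ph (nb x y)"
proof -
  have "(\<lambda>x y. inv ph (nb (ph x) (ph y))) = nb"
  proof (rule Levi_Civita_unique)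
    show "inv ph (nb (ph x) (ph y)) - inv ph (nb (ph y) (ph x)) = br x y" for x y
      by (simp flip: inv_ph_diff nb_torsion_free br_ph)
    show "an (ph x) (g y z) = g (inv ph (nb (ph x) (ph y))) (ph z) + g (ph y) (inv ph (nb (ph x) (ph z)))"
      for x y z
    proof -
      have "ps (an (ph x) (g y z)) = an (ph (ph x)) (g (ph y) (ph z))"
        by (simp add: an_ps g_ph)
      also have "\<dots> = g (nb (ph x) (ph y)) (ph (ph z)) + g (ph (ph y)) (nb (ph x) (ph z))"
        by (rule nb_metric)
      also have "\<dots> = ps (g (inv ph (nb (ph x) (ph y))) (ph z) + g (ph y) (inv ph (nb (ph x) (ph z))))"
        by (simp flip: g_ph)
      finally show ?thesis by (simp only: ps_eq_iff)
    qed
  qed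
  then show ?thesis by (metis ph_inv_into UNIV_I)
qed

end

section \<open>Para-Kahler hom-Lie algebroids\<close>

locale para_Kahler_algebroid = pseudo_Riemannian_algebroid ps sm ph br an g nb
  for ps :: "'f::{comm_ring_1,real_algebra_1} \<Rightarrow> 'f" and sm :: "'f \<Rightarrow> 'a::ab_group_add \<Rightarrow> 'a"
    and ph br an g nb +
  fixes K :: "'a \<Rightarrow> 'a"
  assumes almost_para_Hermitian: "almost_para_hermitian ps sm ph K g"
    and nb_K: "nb x (ph (K y)) = ph (K (nb x y))"
begin

lemma phK_add: "ph (K (x + y)) = ph (K x) + ph (K y)"
  and phK_smult: "ph (K (sm f x)) = sm f (ph (K x))"
  and phK_commute: "ph (K x) = K (ph x)"
  and phK_rank: "\<exists>r. has_rank {x. ph (K x) = x} sm r"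
  using almost_para_Hermitian unfolding almost_para_hermitian_def almost_para_complex_def
  by - (elim conjE exE, blast)+

lemma g_phK: "g (ph (K x)) (ph (K y)) = - g x y"
  using almost_para_Hermitian by (simp add: almost_para_hermitian_def)

lemma mem_A1: "x \<in> A1 ph K \<longleftrightarrow> ph (K x) = x"
  by (simp add: A1_def)

lemma A1_zero: "0 \<in> A1 ph K"
  using phK_add[of 0 0] by (simp add: mem_A1)

lemma A1_add: "x \<in> A1 ph K \<Longrightarrow> y \<in> A1 ph K \<Longrightarrow> x + y \<in> A1 ph K"
  and A1_smult: "x \<in> A1 ph K \<Longrightarrow> sm f x \<in> A1 ph K"
  and A1_nb: "y \<in> A1 ph K \<Longrightarrow> nb x y \<in> A1 ph K"
  by (simp_all add: mem_A1 phK_add phK_smult) (metis nb_K)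

lemma A1_uminus:
  assumes "x \<in> A1 ph K" shows "- x \<in> A1 ph K"
proof -
  have "x + ph (K (- x)) = 0"
    using phK_add[of x "- x"] A1_zero assms by (simp add: mem_A1)
  then show ?thesis by (simp add: mem_A1 add_eq_0_iff)
qed

lemma A1_diff: "x \<in> A1 ph K \<Longrightarrow> y \<in> A1 ph K \<Longrightarrow> x - y \<in> A1 ph K"
  unfolding diff_conv_add_uminus by (intro A1_add A1_uminus)

lemma A1_br: "x \<in> A1 ph K \<Longrightarrow> y \<in> A1 ph K \<Longrightarrow> br x y \<in> A1 ph K"
  by (simp add: nb_torsion_free A1_diff A1_nb)

lemma A1_ph_iff [simp]: "ph x \<in> A1 ph K \<longleftrightarrow> x \<in> A1 ph K"
  by (simp add: mem_A1 flip: phK_commute)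

lemma A1_inv_ph_iff [simp]: "inv ph x \<in> A1 ph K \<longleftrightarrow> x \<in> A1 ph K"
  by (metis A1_ph_iff ph_inv_into UNIV_I)

text \<open>\<open>\<langle>x, y\<rangle> = \<langle>Px, Py\<rangle> = -\<langle>x, y\<rangle>\<close> for \<open>P = \<phi>\<^sub>A \<circ> K\<close>.\<close>
lemma A1_isotropic: "x \<in> A1 ph K \<Longrightarrow> y \<in> A1 ph K \<Longrightarrow> g x y = 0"
  using g_phK[of x y] by (simp add: mem_A1 add_self_eq_0_real_algebra eq_neg_iff_add_eq_0)

lemma bij_betw_ph_A1: "bij_betw ph (A1 ph K) (A1 ph K)"
  by (rule bij_betw_byWitness[where f'="inv ph"]) auto

lemma inv_into_A1: "x \<in> A1 ph K \<Longrightarrow> inv_into (A1 ph K) ph x = inv ph x"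
  using bij_betw_ph_A1 by (intro inv_into_f_eq) (auto simp: bij_betw_def)

lemma hom_Lie_algebroid_A1: "hom_Lie_algebroid ps (A1 ph K) sm ph br an"
proof -
  obtain r where "has_rank (A1 ph K) sm r"
    using phK_rank by (auto simp: A1_def)
  then show ?thesis
    using A1_zero A1_add A1_uminus A1_smult A1_br bij_betw_ph_A1
    by (intro hom_Lie_algebroid_subbundle) auto
qed

text \<open>Isotropy of \<open>A\<^sup>1\<close> kills \<open>\<langle>\<phi> y, \<nabla>\<^sub>z x\<rangle>\<close>, so torsion-freeness turns the metric
  property into a formula for \<open>\<nabla>\<close> in terms of bracket and anchor.\<close>
lemma metric_nb_A1:
  assumes "x \<in> A1 ph K" "y \<in> A1 ph K"
  shows "g (nb x y) (ph z) = an (ph x) (g y z) - g (ph y) (br x z)"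
proof -
  have "g (ph y) (nb z x) = 0"
    using assms by (simp add: A1_isotropic A1_nb)
  then have "g (ph y) (nb x z) = g (ph y) (br x z)"
    by (simp add: nb_torsion_free)
  then show ?thesis
    using nb_metric[of x y z] by (simp add: algebra_simps)
qed

lemma metric_nb_nb_A1:
  assumes x: "x \<in> A1 ph K" and y: "y \<in> A1 ph K" and z: "z \<in> A1 ph K"
  shows "g (nb (ph x) (nb y z)) (ph (ph c)) = an (ph (ph x)) (an (ph y) (g z c))
     - an (ph (ph x)) (g (ph z) (br y c)) - an (ph (ph y)) (g (ph z) (br x c))
     + g (ph (ph z)) (br (ph y) (br x c))"
proof -
  have "g (nb (ph x) (nb y z)) (ph (ph c))
      = an (ph (ph x)) (g (nb y z) (ph c)) - ps (g (nb y z) (br x c))"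
    using metric_nb_A1[of "ph x" "nb y z" "ph c"] x z
    by (simp add: A1_nb g_ph flip: br_ph)
  also have "g (nb y z) (ph c) = an (ph y) (g z c) - g (ph z) (br y c)"
    using metric_nb_A1[OF y z] .
  also have "ps (g (nb y z) (br x c))
      = ps (an (ph y) (g z (inv ph (br x c))) - g (ph z) (br y (inv ph (br x c))))"
    using metric_nb_A1[OF y z, of "inv ph (br x c)"] by simp
  also have "\<dots> = an (ph (ph y)) (g (ph z) (br x c)) - g (ph (ph z)) (br (ph y) (br x c))"
    by (simp add: an_ps br_ph flip: g_ph)
  finally show ?thesis
    by (simp add: an_diff_right algebra_simps)
qed

lemma metric_nb_br_A1:
  assumes x: "x \<in> A1 ph K" and y: "y \<in> A1 ph K" and z: "z \<in> A1 ph K"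
  shows "g (nb (br x y) (ph z)) (ph (ph c)) = an (ph (ph x)) (an (ph y) (g z c))
     - an (ph (ph y)) (an (ph x) (g z c)) - g (ph (ph z)) (br (br x y) (ph c))"
proof -
  have "g (nb (br x y) (ph z)) (ph (ph c))
      = an (ph (br x y)) (g (ph z) (ph c)) - g (ph (ph z)) (br (br x y) (ph c))"
    using metric_nb_A1[of "br x y" "ph z" "ph c"] x y z by (simp add: A1_br)
  also have "an (ph (br x y)) (g (ph z) (ph c)) = an (br (ph x) (ph y)) (ps (g z c))"
    by (simp add: br_ph g_ph)
  also have "\<dots> = an (ph (ph x)) (an (ph y) (g z c)) - an (ph (ph y)) (an (ph x) (g z c))"
    by (simp add: an_br)
  finally show ?thesis .
qed

text \<open>The curvature of \<open>\<nabla>\<close> vanishes on \<open>A\<^sup>1\<close>: paired with \<open>\<phi>\<^sub>A\<^sup>2 c\<close> via the formulas above,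
  it reduces to the Jacobiator of \<open>y, x, c\<close>.\<close>
lemma nb_flat_A1:
  assumes x: "x \<in> A1 ph K" and y: "y \<in> A1 ph K" and z: "z \<in> A1 ph K"
  shows "nb (br x y) (ph z) = nb (ph x) (nb y z) - nb (ph y) (nb x z)"
proof -
  have "g (nb (ph x) (nb y z) - nb (ph y) (nb x z) - nb (br x y) (ph z)) w = 0" for w
  proof -
    define c where "c = inv ph (inv ph w)"
    have Jacobi: "br (ph y) (br x c) - br (ph x) (br y c) + br (br x y) (ph c) = 0"
      using br_Jacobi[of x y c] br_uminus_right[of "ph y" "br c x"] br_skew[of c x]
        br_skew[of "ph c" "br x y"]
      by (simp add: algebra_simps)
    have "g (nb (ph x) (nb y z) - nb (ph y) (nb x z) - nb (br x y) (ph z)) (ph (ph c))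
        = g (ph (ph z)) (br (ph y) (br x c) - br (ph x) (br y c) + br (br x y) (ph c))"
      unfolding g_diff_left metric_nb_nb_A1[OF x y z] metric_nb_nb_A1[OF y x z] metric_nb_br_A1[OF x y z]
      by (simp add: algebra_simps)
    moreover have "ph (ph c) = w"
      by (simp add: c_def)
    ultimately show ?thesis
      using Jacobi by simp
  qed
  then show ?thesis
    by (metis g_nondegenerate eq_diff_eq add_0)
qed

abbreviation "nb_dual \<equiv> dual_nabla ps (A1 ph K) ph an nb"

lemma nb_dual_apply:
  "x \<in> A1 ph K \<Longrightarrow> nb_dual x \<xi> y = (if y \<in> A1 ph K then
      an (ph x) (\<xi> (inv ph y)) - ps (\<xi> (nb (inv ph x) (inv ph (inv ph y)))) else 0)"
  by (simp add: dual_nabla_def inv_into_A1)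

lemma dagger_A1_apply:
  "dagger ps (A1 ph K) ph \<xi> y = (if y \<in> A1 ph K then ps (\<xi> (inv ph y)) else 0)"
  by (simp add: dagger_def inv_into_A1)

lemma inv_ph_nb: "inv ph (nb x y) = nb (inv ph x) (inv ph y)"
  using nb_ph[of "inv ph x" "inv ph y"] by simp

lemma inv_ph_br: "inv ph (br x y) = br (inv ph x) (inv ph y)"
  using arg_cong[OF br_ph[of "inv ph x" "inv ph y"], of "inv ph"] by simp

lemma nb_dual_dual:
  assumes x: "x \<in> A1 ph K" and \<xi>: "\<xi> \<in> dual_on (A1 ph K) sm"
  shows "nb_dual x \<xi> \<in> dual_on (A1 ph K) sm"
  unfolding dual_on_def[of "A1 ph K"] mem_Collect_eq
proof (intro conjI ballI allI impI)
  show "nb_dual x \<xi> (y + z) = nb_dual x \<xi> y + nb_dual x \<xi> z" if "y \<in> A1 ph K" "z \<in> A1 ph K" for y z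
    using that x \<xi> by (simp add: nb_dual_apply A1_add A1_nb nb_add_right dual_on_add an_plus_right)
  show "nb_dual x \<xi> (sm f y) = f * nb_dual x \<xi> y" if y: "y \<in> A1 ph K" for f y
  proof -
    have "nb (inv ph x) (inv ph (inv ph (sm f y)))
        = sm (inv ps f) (nb (inv ph x) (inv ph (inv ph y))) + sm (an x (inv ps (inv ps f))) (inv ph y)"
      by (simp add: nb_smult_right)
    then have "\<xi> (nb (inv ph x) (inv ph (inv ph (sm f y))))
        = inv ps f * \<xi> (nb (inv ph x) (inv ph (inv ph y))) + an x (inv ps (inv ps f)) * \<xi> (inv ph y)"
      using y \<xi> by (simp add: A1_nb A1_smult dual_on_add dual_on_smult)
    moreover have "ps (an x (inv ps (inv ps f))) = an (ph x) (inv ps f)"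
      by (simp add: an_ps)
    ultimately show ?thesis
      using x y \<xi> by (simp add: nb_dual_apply A1_smult dual_on_smult an_times_right algebra_simps)
  qed
qed (simp add: nb_dual_apply x)

lemma nb_dual_add_left:
  "x \<in> A1 ph K \<Longrightarrow> y \<in> A1 ph K \<Longrightarrow> \<xi> \<in> dual_on (A1 ph K) sm \<Longrightarrow>
    nb_dual (x + y) \<xi> = nb_dual x \<xi> + nb_dual y \<xi>"
  by (simp add: fun_eq_iff nb_dual_apply A1_add A1_nb an_add nb_add_left dual_on_add)

lemma nb_dual_smult_left:
  "x \<in> A1 ph K \<Longrightarrow> \<xi> \<in> dual_on (A1 ph K) sm \<Longrightarrow> nb_dual (sm f x) \<xi> = (\<lambda>y. ps f * nb_dual x \<xi> y)"
  by (simp add: fun_eq_iff nb_dual_apply A1_smult A1_nb an_smult nb_smult_left dual_on_smult algebra_simps)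

lemma nb_dual_add_right:
  "x \<in> A1 ph K \<Longrightarrow> nb_dual x (\<xi> + \<eta>) = nb_dual x \<xi> + nb_dual x \<eta>"
  by (simp add: fun_eq_iff nb_dual_apply an_plus_right)

lemma nb_dual_scale_right:
  "x \<in> A1 ph K \<Longrightarrow> nb_dual x (\<lambda>y. f * \<xi> y)
    = (\<lambda>y. ps f * nb_dual x \<xi> y + an (ph x) f * dagger ps (A1 ph K) ph \<xi> y)"
  by (simp add: fun_eq_iff nb_dual_apply dagger_A1_apply an_times_right algebra_simps)

lemma dagger_nb_dual:
  "x \<in> A1 ph K \<Longrightarrow> dagger ps (A1 ph K) ph (nb_dual x \<xi>) = nb_dual (ph x) (dagger ps (A1 ph K) ph \<xi>)"
  by (simp add: fun_eq_iff nb_dual_apply dagger_A1_apply an_ps inv_ph_nb A1_nb)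

text \<open>This is where flatness of \<open>\<nabla>\<close> on \<open>A\<^sup>1\<close> enters.\<close>
lemma nb_dual_br:
  assumes x: "x \<in> A1 ph K" and y: "y \<in> A1 ph K" and \<gamma>: "\<gamma> \<in> dual_on (A1 ph K) sm"
  shows "nb_dual (br x y) (dagger ps (A1 ph K) ph \<gamma>) = nb_dual (ph x) (nb_dual y \<gamma>) - nb_dual (ph y) (nb_dual x \<gamma>)"
proof (rule ext)
  fix w
  show "nb_dual (br x y) (dagger ps (A1 ph K) ph \<gamma>) w
      = (nb_dual (ph x) (nb_dual y \<gamma>) - nb_dual (ph y) (nb_dual x \<gamma>)) w"
  proof (cases "w \<in> A1 ph K")
    case True
    let ?inv2 = "\<lambda>u. inv ph (inv ph u)"
    have "nb (br (?inv2 x) (?inv2 y)) (ph (?inv2 (?inv2 w)))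
        = nb (ph (?inv2 x)) (nb (?inv2 y) (?inv2 (?inv2 w))) - nb (ph (?inv2 y)) (nb (?inv2 x) (?inv2 (?inv2 w)))"
      using x y True by (intro nb_flat_A1) simp_all
    then have "\<gamma> (nb (br (?inv2 x) (?inv2 y)) (inv ph (?inv2 w)))
        = \<gamma> (nb (inv ph x) (nb (?inv2 y) (?inv2 (?inv2 w)))) - \<gamma> (nb (inv ph y) (nb (?inv2 x) (?inv2 (?inv2 w))))"
      using x y True \<gamma> by (simp add: A1_nb A1_diff dual_on_diff_apply)
    then show ?thesis
      using x y True \<gamma> by (simp add: nb_dual_apply dagger_A1_apply inv_ph_nb inv_ph_br A1_nb A1_br
          br_ph an_ps an_br an_diff_right)
  qed (simp add: nb_dual_apply x y A1_br)
qed

lemma hom_dual_representation_nb_dual: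
  "hom_dual_representation ps (A1 ph K) sm ph br an nb_dual"
  by (intro hom_dual_representation.intro hom_dual_representation_axioms.intro hom_Lie_algebroid_on.intro)
    (simp_all add: hom_Lie_algebroid_A1 nb_dual_dual nb_dual_add_left nb_dual_smult_left nb_dual_add_right
      nb_dual_scale_right dagger_nb_dual nb_dual_br)

lemma hom_Lie_algebroid_A1_semidirect:
  "hom_Lie_algebroid ps (sum_carrier (A1 ph K) sm) (sum_smult sm) (sum_phi ps (A1 ph K) ph)
     (sum_bracket br nb_dual) (sum_anchor an)"
  using hom_dual_representation_nb_dual by (rule hom_dual_representation.hom_Lie_algebroid_semidirect)

end

theorem mainTheorem9:
  fixes ps :: "'f::{comm_ring_1,real_algebra_1} \<Rightarrow> 'f"
    and sm :: "'f \<Rightarrow> 'a::ab_group_add \<Rightarrow> 'a"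
    and ph :: "'a \<Rightarrow> 'a" and br :: "'a \<Rightarrow> 'a \<Rightarrow> 'a" and an :: "'a \<Rightarrow> 'f \<Rightarrow> 'f"
    and K :: "'a \<Rightarrow> 'a" and g :: "'a \<Rightarrow> 'a \<Rightarrow> 'f" and nb :: "'a \<Rightarrow> 'a \<Rightarrow> 'a"
  assumes "para_Kahler ps sm ph br an K g nb"
  shows "hom_Lie_algebroid ps (sum_carrier (A1 ph K) sm) (sum_smult sm) (sum_phi ps (A1 ph K) ph)
           (sum_bracket br (dual_nabla ps (A1 ph K) ph an nb)) (sum_anchor an)"
proof -
  interpret para_Kahler_algebroid ps sm ph br an g nb K
    using assms by unfold_locales (simp_all add: para_Kahler_def almost_para_hermitian_def)
  show ?thesis
    by (rule hom_Lie_algebroid_A1_semidirect)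
qed

end
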